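(* Let $0<\delta<2$ and let $\xi$ satisfy $-1<\xi\le 0$ and $(1+\xi)\sqrt{h(\delta)}-\xi(1+\delta\sqrt{\mu_2})<1$. Let $\{x_k\},\{z_k\}$ be generated by the GSKM method (defined in the context) from $x_0$. Define $\Pi_1=\sqrt{h(\delta)}$, $\Pi_2=|\xi|$, $\Pi_3=\delta\sqrt{\mu_2h(\delta)}$, $\Pi_4=|\xi|(1+\delta\sqrt{\mu_2})$, $D=(\Pi_1-\Pi_4)^2+4\Pi_2\Pi_3$, $\Gamma_1=\frac{\Pi_1-\Pi_4+\sqrt D}{2\Pi_3}$, $\Gamma_2=\frac{\Pi_1-\Pi_4-\sqrt D}{2\Pi_3}$, $\Gamma_3=\frac{\Pi_3}{\sqrt D}$, $\rho_1=\frac12(\Pi_1+\Pi_4-\sqrt D)$, $\rho_2=\frac12(\Pi_1+\Pi_4+\sqrt D)$. Then $\{x_k\}$ converges and, for all $k\ge1$, $\mathbb{E}[d(x_{k+1},P)]\le(-\Gamma_2\Gamma_3\rho_1^k+\Gamma_1\Gamma_3\rho_2^k)\,d(x_0,P)$ and $\mathbb{E}[\|z_{k+1}-z_k\|]\le(-\Gamma_3\rho_1^k+\Gamma_3\rho_2^k)\,d(x_0,P)$, where $\Gamma_1,\Gamma_3\ge0$ and $0\le\rho_1\le\rho_2<1$.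
   Context: Let $A\in\mathbb{R}^{m\times n}$ have rows $a_1^T,\dots,a_m^T$ with $\|a_i\|_2=1$ for all $i$, and $b\in\mathbb{R}^m$; assume $Ax\le b$ is consistent and let $P=\{x: Ax\le b\}$. $\mathcal{P}(x)$ is the Euclidean projection onto $P$ and $d(x,P)=\|x-\mathcal{P}(x)\|$. $t^+=\max\{t,0\}$. Fix an integer $1\le\beta\le m$. Let $L>0$ be a Hoffman constant: $d(x,P)^2\le L^2\|(Ax-b)^+\|^2$ for all $x$. Set $\mu_1=\frac{1}{mL^2}$, $\mu_2=\min\{1,\frac{\beta}{m}\lambda_{\max}(A^TA)\}$, $\eta=2\delta-\delta^2$, $h(\delta)=1-\eta\mu_1$. GSKM method (parameters $\beta,\delta,\xi$): given $x_0$, set $x_1=x_0$. For $k=1,2,\dots$, choose $\tau_k\subseteq\{1,\dots,m\}$ of size $\beta$ uniformly at random (independently of the past), let $i^*_k\in\tau_k$ maximize $(a_i^Tx_k-b_i)^+$ over $i\in\tau_k$, set $z_k=x_k-\delta(a_{i^*_k}^Tx_k-b_{i^*_k})^+a_{i^*_k}$ and $x_{k+1}=(1-\xi)z_k+\xi z_{k-1}$, with the convention $z_0=z_1$. $\mathbb{E}$ denotes total expectation. *)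

theory Defs
  imports "HOL-Probability.Probability"
begin

definition pos_part_vec :: "real ^ 'm \<Rightarrow> real ^ 'm" where
  "pos_part_vec v = (\<chi> i. max (v $ i) 0)"

definition lambda_max :: "real ^ 'n ^ 'n \<Rightarrow> real" where
  "lambda_max M = Max {c. \<exists>v. v \<noteq> 0 \<and> M *v v = c *\<^sub>R v}"

definition subsets_of_size :: "nat \<Rightarrow> 'm set set" where
  "subsets_of_size beta = {S. card S = beta}"

text \<open>Sample space: i.i.d. uniformly chosen subsets tau_1, tau_2, ... (coordinate k is tau_k;
  coordinate 0 is unused).\<close>
definition gskm_space :: "nat \<Rightarrow> (nat \<Rightarrow> ('m::finite) set) measure" where
  "gskm_space beta = PiM UNIV (\<lambda>_. measure_pmf (pmf_of_set (subsets_of_size beta)))"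

definition gskm_step ::
  "real ^ 'n ^ 'm \<Rightarrow> real ^ 'm \<Rightarrow> real \<Rightarrow> (real ^ 'n \<Rightarrow> 'm set \<Rightarrow> 'm)
   \<Rightarrow> real ^ 'n \<Rightarrow> 'm set \<Rightarrow> real ^ 'n" where
  "gskm_step A b \<delta> sel x \<tau> =
     (let i = sel x \<tau> in x - (\<delta> * max ((A $ i) \<bullet> x - b $ i) 0) *\<^sub>R (A $ i))"

text \<open>gskm_pair A b delta xi sel x0 k omega = (x_(k+1), z_k).\<close>
primrec gskm_pair ::
  "real ^ 'n ^ 'm \<Rightarrow> real ^ 'm \<Rightarrow> real \<Rightarrow> real \<Rightarrow> (real ^ 'n \<Rightarrow> 'm set \<Rightarrow> 'm)
   \<Rightarrow> real ^ 'n \<Rightarrow> nat \<Rightarrow> (nat \<Rightarrow> 'm set) \<Rightarrow> (real ^ 'n) \<times> (real ^ 'n)" where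
  "gskm_pair A b \<delta> \<xi> sel x0 0 \<omega> = (x0, gskm_step A b \<delta> sel x0 (\<omega> 1))"
| "gskm_pair A b \<delta> \<xi> sel x0 (Suc k) \<omega> =
     (let xk = fst (gskm_pair A b \<delta> \<xi> sel x0 k \<omega>);
          zprev = snd (gskm_pair A b \<delta> \<xi> sel x0 k \<omega>);
          znew = gskm_step A b \<delta> sel xk (\<omega> (Suc k))
      in ((1 - \<xi>) *\<^sub>R znew + \<xi> *\<^sub>R zprev, znew))"

text \<open>Iterates x_k (with x_1 = x_0) and z_k (with z_0 = z_1).\<close>
definition gskm_x where
  "gskm_x A b \<delta> \<xi> sel x0 k \<omega> = (if k = 0 then x0 else fst (gskm_pair A b \<delta> \<xi> sel x0 (k - 1) \<omega>))"

definition gskm_z where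
  "gskm_z A b \<delta> \<xi> sel x0 k \<omega> = snd (gskm_pair A b \<delta> \<xi> sel x0 k \<omega>)"

end

theory Submission
  imports Defs
begin

text \<open>Write \<open>u\<^sub>k = E d(x\<^sub>k\<^sub>+\<^sub>1, P)\<close> and \<open>e\<^sub>k = E \<parallel>z\<^sub>k\<^sub>+\<^sub>1 - z\<^sub>k\<parallel>\<close>. The sketch \<open>\<tau>\<^sub>k\<close> is independent
  of \<open>x\<^sub>k\<close>, so one step can be analysed for a fixed point \<open>y\<close>: the Kaczmarz step towards the most
  violated constraint of a uniform random sketch decreases \<open>d(y, P)\<^sup>2\<close> by \<open>\<eta>\<close> times the squared
  selected residual, which by the Hoffman bound is on average at least \<open>\<mu>\<^sub>1 d(y, P)\<^sup>2\<close>; the step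
  length is on average at most \<open>\<delta> \<surd>\<mu>\<^sub>2 d(y, P)\<close>. The momentum term moves \<open>x\<^sub>k\<^sub>+\<^sub>1\<close> away from
  \<open>z\<^sub>k\<close> by \<open>|\<xi>| \<parallel>z\<^sub>k - z\<^sub>k\<^sub>-\<^sub>1\<parallel>\<close>, and together this gives
  \<open>u\<^sub>k\<^sub>+\<^sub>1 \<le> \<Pi>\<^sub>1 u\<^sub>k + \<Pi>\<^sub>2 e\<^sub>k\<close> and \<open>e\<^sub>k\<^sub>+\<^sub>1 \<le> \<Pi>\<^sub>3 u\<^sub>k + \<Pi>\<^sub>4 e\<^sub>k\<close>. The matrix of this
  recurrence is nonnegative with eigenvalues \<open>0 \<le> \<rho>\<^sub>1 \<le> \<rho>\<^sub>2 < 1\<close>; diagonalising it gives the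
  bounds, and the geometric decay of \<open>e\<^sub>k\<close> makes \<open>\<Sum> \<parallel>z\<^sub>k\<^sub>+\<^sub>1 - z\<^sub>k\<parallel>\<close> finite almost surely,
  so \<open>z\<^sub>k\<close> and hence \<open>x\<^sub>k\<close> converge.\<close>

section \<open>Functions of finitely many coordinates of an i.i.d. sequence\<close>

abbreviation iid_space :: "'a pmf \<Rightarrow> (nat \<Rightarrow> 'a) measure" where
  "iid_space p \<equiv> PiM UNIV (\<lambda>_. measure_pmf p)"

definition depends_on_prefix :: "nat \<Rightarrow> ((nat \<Rightarrow> 'a) \<Rightarrow> 'b) \<Rightarrow> bool" where
  "depends_on_prefix n f \<longleftrightarrow> (\<forall>\<omega> \<omega>'. (\<forall>i<n. \<omega> i = \<omega>' i) \<longrightarrow> f \<omega> = f \<omega>')"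

lemma depends_on_prefix_mono: "depends_on_prefix n f \<Longrightarrow> n \<le> n' \<Longrightarrow> depends_on_prefix n' f"
  unfolding depends_on_prefix_def by auto

lemma depends_on_prefix_comp: "depends_on_prefix n f \<Longrightarrow> depends_on_prefix n (\<lambda>\<omega>. g (f \<omega>))"
  unfolding depends_on_prefix_def by metis

lemma depends_on_prefix_comp2:
  "depends_on_prefix n f \<Longrightarrow> depends_on_prefix n g \<Longrightarrow> depends_on_prefix n (\<lambda>\<omega>. h (f \<omega>) (g \<omega>))"
  unfolding depends_on_prefix_def by metis

lemma depends_on_prefix_coordinate: "i < n \<Longrightarrow> depends_on_prefix n (\<lambda>\<omega>. \<omega> i)"
  unfolding depends_on_prefix_def by auto

lemma depends_on_prefix_restrict: "depends_on_prefix n f \<Longrightarrow> f (restrict \<omega> {..<n}) = f \<omega>"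
  unfolding depends_on_prefix_def by auto

lemma borel_measurable_PiM_lessThan_countable:
  fixes p :: "'a::countable pmf" and f :: "(nat \<Rightarrow> 'a) \<Rightarrow> real"
  shows "f \<in> borel_measurable (PiM {..<n} (\<lambda>_. measure_pmf p))"
proof -
  have "sets (PiM {..<n} (\<lambda>_. measure_pmf p)) = sets (PiM {..<n} (\<lambda>_. count_space (UNIV::'a set)))"
    by (rule sets_PiM_cong) auto
  also have "PiM {..<n} (\<lambda>_. count_space (UNIV::'a set)) = count_space (PiE {..<n} (\<lambda>_. UNIV))"
    by (rule count_space_PiM_finite) auto
  finally have sets_eq: "sets (PiM {..<n} (\<lambda>_. measure_pmf p)) = sets (count_space (PiE {..<n} (\<lambda>_. UNIV)))" .
  show ?thesis
    by (subst measurable_cong_sets[OF sets_eq refl]) simp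
qed

lemma borel_measurable_depends_on_prefix:
  fixes p :: "'a::countable pmf" and f :: "(nat \<Rightarrow> 'a) \<Rightarrow> real"
  assumes "depends_on_prefix n f"
  shows "f \<in> borel_measurable (iid_space p)"
proof -
  have "(\<lambda>\<omega>. f (restrict \<omega> {..<n})) \<in> borel_measurable (iid_space p)"
    by (rule measurable_comp[OF measurable_restrict_subset borel_measurable_PiM_lessThan_countable,
          unfolded comp_def]) auto
  then show ?thesis using depends_on_prefix_restrict[OF assms] by simp
qed

lemma bounded_depends_on_prefix:
  fixes f :: "(nat \<Rightarrow> 'a::finite) \<Rightarrow> real"
  assumes "depends_on_prefix n f"
  obtains B where "\<And>\<omega>. \<bar>f \<omega>\<bar> \<le> B"
proof -
  have "range f \<subseteq> f ` PiE {..<n} (\<lambda>_. UNIV)"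
  proof
    fix y assume "y \<in> range f"
    then obtain \<omega> where "y = f (restrict \<omega> {..<n})"
      using depends_on_prefix_restrict[OF assms] by auto
    then show "y \<in> f ` PiE {..<n} (\<lambda>_. UNIV)" by auto
  qed
  moreover have "finite (f ` PiE {..<n} (\<lambda>_. (UNIV::'a set)))"
    by (intro finite_imageI finite_PiE) auto
  ultimately have "bounded (range f)" by (meson finite_imp_bounded finite_subset)
  then show ?thesis using that by (auto simp: bounded_real)
qed

lemma integrable_depends_on_prefix:
  fixes p :: "'a::finite pmf" and f :: "(nat \<Rightarrow> 'a) \<Rightarrow> real"
  assumes "depends_on_prefix n f" and "f \<in> borel_measurable (PiM I (\<lambda>_. measure_pmf p))"
  shows "integrable (PiM I (\<lambda>_. measure_pmf p)) f"
proof -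
  interpret prob_space "PiM I (\<lambda>_. measure_pmf p)"
    by (intro prob_space_PiM prob_space_measure_pmf)
  obtain B where "\<And>\<omega>. \<bar>f \<omega>\<bar> \<le> B" using bounded_depends_on_prefix[OF assms(1)] by blast
  then show ?thesis using assms(2) by (intro integrable_const_bound[where B=B]) auto
qed

lemma integrable_iid_space:
  fixes p :: "'a::finite pmf" and f :: "(nat \<Rightarrow> 'a) \<Rightarrow> real"
  assumes "depends_on_prefix n f"
  shows "integrable (iid_space p) f"
  using integrable_depends_on_prefix[OF assms borel_measurable_depends_on_prefix[OF assms]] .

lemma integral_iid_space_prefix:
  fixes p :: "'a::finite pmf" and f :: "(nat \<Rightarrow> 'a) \<Rightarrow> real"
  assumes "depends_on_prefix n f"
  shows "(\<integral>\<omega>. f \<omega> \<partial>iid_space p) = (\<integral>\<omega>. f \<omega> \<partial>PiM {..<n} (\<lambda>_. measure_pmf p))"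
proof -
  interpret product_prob_space "\<lambda>_. measure_pmf p" UNIV
    by unfold_locales
  have "(\<integral>\<omega>. f \<omega> \<partial>PiM {..<n} (\<lambda>_. measure_pmf p))
      = (\<integral>\<omega>. f \<omega> \<partial>distr (iid_space p) (PiM {..<n} (\<lambda>_. measure_pmf p)) (\<lambda>\<omega>. restrict \<omega> {..<n}))"
    by (subst distr_PiM_restrict_finite) auto
  also have "\<dots> = (\<integral>\<omega>. f (restrict \<omega> {..<n}) \<partial>iid_space p)"
    by (rule integral_distr[OF measurable_restrict_subset borel_measurable_PiM_lessThan_countable]) auto
  also have "\<dots> = (\<integral>\<omega>. f \<omega> \<partial>iid_space p)"
    using depends_on_prefix_restrict[OF assms] by simp
  finally show ?thesis by (rule sym)
qed

text \<open>The coordinate \<open>\<omega> k\<close> is independent of everything that depends only on \<open>\<omega> 0, \<dots>, \<omega> (k - 1)\<close>,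
  so it can be integrated out first.\<close>
lemma integral_iid_space_fresh_coordinate:
  fixes p :: "'a::finite pmf" and X :: "(nat \<Rightarrow> 'a) \<Rightarrow> 'b" and \<phi> :: "'b \<Rightarrow> 'a \<Rightarrow> real"
  assumes X: "depends_on_prefix k X"
  shows "(\<integral>\<omega>. \<phi> (X \<omega>) (\<omega> k) \<partial>iid_space p) = (\<integral>\<omega>. (\<integral>\<tau>. \<phi> (X \<omega>) \<tau> \<partial>p) \<partial>iid_space p)"
proof -
  interpret product_prob_space "\<lambda>_. measure_pmf p" UNIV
    by unfold_locales
  have dep_Suc: "depends_on_prefix (Suc k) (\<lambda>\<omega>. \<phi> (X \<omega>) (\<omega> k))"
    using X unfolding depends_on_prefix_def by (metis less_Suc_eq)
  have X_upd: "X (x(k := y)) = X x" for x y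
    using X unfolding depends_on_prefix_def by auto
  have int_Suc: "integrable (PiM (insert k {..<k}) (\<lambda>_. measure_pmf p)) (\<lambda>\<omega>. \<phi> (X \<omega>) (\<omega> k))"
    using integrable_depends_on_prefix[OF dep_Suc borel_measurable_PiM_lessThan_countable]
    by (metis lessThan_Suc)
  have "(\<integral>\<omega>. \<phi> (X \<omega>) (\<omega> k) \<partial>iid_space p)
      = (\<integral>\<omega>. \<phi> (X \<omega>) (\<omega> k) \<partial>PiM (insert k {..<k}) (\<lambda>_. measure_pmf p))"
    using integral_iid_space_prefix[OF dep_Suc] lessThan_Suc by simp
  also have "\<dots> = (\<integral>\<omega>. (\<integral>\<tau>. \<phi> (X \<omega>) \<tau> \<partial>p) \<partial>PiM {..<k} (\<lambda>_. measure_pmf p))"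
    using int_Suc by (subst product_integral_insert) (auto simp: X_upd)
  also have "\<dots> = (\<integral>\<omega>. (\<integral>\<tau>. \<phi> (X \<omega>) \<tau> \<partial>p) \<partial>iid_space p)"
    by (rule integral_iid_space_prefix[symmetric], rule depends_on_prefix_comp[OF X])
  finally show ?thesis .
qed

lemma integral_le_add_cmult:
  fixes f g h :: "'a \<Rightarrow> real"
  assumes "integrable M f" "integrable M g" "integrable M h" "\<And>\<omega>. f \<omega> \<le> g \<omega> + c * h \<omega>"
  shows "integral\<^sup>L M f \<le> integral\<^sup>L M g + c * integral\<^sup>L M h"
proof -
  have "integral\<^sup>L M f \<le> (\<integral>\<omega>. g \<omega> + c * h \<omega> \<partial>M)"
    using assms by (intro integral_mono) auto
  also have "\<dots> = integral\<^sup>L M g + c * integral\<^sup>L M h"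
    using assms by simp
  finally show ?thesis .
qed

section \<open>Almost sure convergence from summable expected increments\<close>

lemma convergent_if_summable_norm_diff:
  fixes f :: "nat \<Rightarrow> 'a::banach"
  assumes "summable (\<lambda>n. norm (f (Suc n) - f n))"
  shows "convergent f"
proof -
  have "convergent (\<lambda>n. \<Sum>k<n. f (Suc k) - f k)"
    using summable_norm_cancel[OF assms] summable_iff_convergent by blast
  then have "convergent (\<lambda>n. (f n - f 0) + f 0)"
    unfolding sum_lessThan_telescope by (intro convergent_add convergent_const)
  then show ?thesis by simp
qed

lemma AE_summable_if_summable_integral:
  fixes s :: "nat \<Rightarrow> 'a \<Rightarrow> real"
  assumes int: "\<And>k. integrable M (s k)" and nonneg: "\<And>k \<omega>. 0 \<le> s k \<omega>"
    and sum: "summable (\<lambda>k. integral\<^sup>L M (s k))"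
  shows "AE \<omega> in M. summable (\<lambda>k. s k \<omega>)"
proof -
  have [measurable]: "s k \<in> borel_measurable M" for k using int by blast
  have "(\<integral>\<^sup>+\<omega>. (\<Sum>k. ennreal (s k \<omega>)) \<partial>M) = (\<Sum>k. \<integral>\<^sup>+\<omega>. ennreal (s k \<omega>) \<partial>M)"
    by (rule nn_integral_suminf) measurable
  also have "\<dots> = (\<Sum>k. ennreal (integral\<^sup>L M (s k)))"
    using int nonneg by (simp add: nn_integral_eq_integral)
  also have "\<dots> = ennreal (\<Sum>k. integral\<^sup>L M (s k))"
    using sum nonneg by (intro suminf_ennreal2) (auto intro: integral_nonneg_AE)
  finally have "(\<integral>\<^sup>+\<omega>. (\<Sum>k. ennreal (s k \<omega>)) \<partial>M) \<noteq> \<infinity>" by simp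
  then have "AE \<omega> in M. (\<Sum>k. ennreal (s k \<omega>)) \<noteq> \<infinity>"
    by (intro nn_integral_noteq_infinite) measurable
  then show ?thesis
    by (rule eventually_mono) (use nonneg in \<open>auto intro: summable_suminf_not_top\<close>)
qed

lemma AE_convergent_if_summable_integral_norm_diff:
  fixes Z :: "nat \<Rightarrow> 'a \<Rightarrow> 'b::banach"
  assumes "\<And>k. integrable M (\<lambda>\<omega>. norm (Z (Suc k) \<omega> - Z k \<omega>))"
    and "summable (\<lambda>k. \<integral>\<omega>. norm (Z (Suc k) \<omega> - Z k \<omega>) \<partial>M)"
  shows "AE \<omega> in M. convergent (\<lambda>k. Z k \<omega>)"
  using AE_summable_if_summable_integral[OF assms(1) _ assms(2)]
  by (rule eventually_mono) (auto intro: convergent_if_summable_norm_diff)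

section \<open>Uniformly random subsets\<close>

lemma card_subsets_containing:
  fixes i :: "'m::finite"
  assumes "1 \<le> k"
  shows "card {S::'m set. card S = k \<and> i \<in> S} = (CARD('m) - 1) choose (k - 1)"
proof -
  have eq: "{S::'m set. card S = k \<and> i \<in> S} = insert i ` {T. T \<subseteq> -{i} \<and> card T = k - 1}"
  proof (intro set_eqI iffI)
    fix S assume "S \<in> {S::'m set. card S = k \<and> i \<in> S}"
    then have "S = insert i (S - {i})" "S - {i} \<subseteq> -{i}" "card (S - {i}) = k - 1" by auto
    then show "S \<in> insert i ` {T. T \<subseteq> -{i} \<and> card T = k - 1}" by blast
  next
    fix S assume "S \<in> insert i ` {T. T \<subseteq> -{i} \<and> card T = k - 1}"
    then obtain T where T: "S = insert i T" "i \<notin> T" "card T = k - 1" by auto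
    then show "S \<in> {S::'m set. card S = k \<and> i \<in> S}" using assms by auto
  qed
  have "inj_on (insert i) {T. T \<subseteq> -{i} \<and> card T = k - 1}"
    by (rule inj_onI) auto
  then have "card {S::'m set. card S = k \<and> i \<in> S} = card {T. T \<subseteq> -{i} \<and> card T = k - 1}"
    unfolding eq by (rule card_image)
  also have "\<dots> = card (-{i}) choose (k - 1)" by (rule n_subsets) simp
  finally show ?thesis by (simp add: Compl_eq_Diff_UNIV card_Diff_singleton)
qed

lemma card_subsets_of_size: "card (subsets_of_size k :: 'm::finite set set) = CARD('m) choose k"
  using n_subsets[of "UNIV :: 'm set" k] unfolding subsets_of_size_def by simp

lemma subsets_of_size_nonempty:
  assumes "k \<le> CARD('m::finite)"
  shows "subsets_of_size k \<noteq> ({} :: 'm set set)"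
  using obtain_subset_with_card_n[OF assms] unfolding subsets_of_size_def by blast

text \<open>Each index lies in the same number of \<open>k\<close>-subsets, so a uniform \<open>k\<close>-subset samples
  a fraction \<open>k / m\<close> of any sum over the \<open>m\<close> indices.\<close>
lemma integral_sum_uniform_subset:
  fixes g :: "'m::finite \<Rightarrow> real"
  assumes "1 \<le> k" "k \<le> CARD('m)"
  shows "(\<integral>\<tau>. (\<Sum>i\<in>\<tau>. g i) \<partial>pmf_of_set (subsets_of_size k))
       = real k / real CARD('m) * (\<Sum>i\<in>UNIV. g i)"
proof -
  let ?S = "subsets_of_size k :: 'm set set"
  have "(\<Sum>\<tau>\<in>?S. (\<Sum>i\<in>\<tau>. g i)) = (\<Sum>i\<in>UNIV. (\<Sum>\<tau>\<in>?S. if i \<in> \<tau> then g i else 0))"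
    by (subst sum.swap[symmetric]) (simp add: sum.If_cases)
  also have "\<dots> = (\<Sum>i\<in>UNIV. g i * real ((CARD('m) - 1) choose (k - 1)))"
  proof (intro sum.cong refl)
    fix i :: 'm
    have "{\<tau>\<in>?S. i \<in> \<tau>} = {S::'m set. card S = k \<and> i \<in> S}"
      unfolding subsets_of_size_def by auto
    then show "(\<Sum>\<tau>\<in>?S. if i \<in> \<tau> then g i else 0) = g i * real ((CARD('m) - 1) choose (k - 1))"
      using card_subsets_containing[OF assms(1), of i] by (simp add: sum.If_cases Int_def)
  qed
  finally have sum_eq: "(\<Sum>\<tau>\<in>?S. (\<Sum>i\<in>\<tau>. g i)) = (\<Sum>i\<in>UNIV. g i) * real ((CARD('m) - 1) choose (k - 1))"
    by (simp add: sum_distrib_right)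
  have "real k * real (CARD('m) choose k) = real CARD('m) * real ((CARD('m) - 1) choose (k - 1))"
    using times_binomial_minus1_eq[of k "CARD('m)"] assms(1) by (metis of_nat_mult less_le_trans zero_less_one)
  moreover have "real (CARD('m) choose k) > 0" using assms(2) by simp
  ultimately show ?thesis
    using subsets_of_size_nonempty[OF assms(2)]
    by (simp add: integral_pmf_of_set sum_eq card_subsets_of_size field_simps)
qed

lemma integral_pmf_of_set_mono:
  fixes f g :: "'a \<Rightarrow> real"
  assumes "finite S" "S \<noteq> {}" "\<And>x. x \<in> S \<Longrightarrow> f x \<le> g x"
  shows "(\<integral>x. f x \<partial>pmf_of_set S) \<le> (\<integral>x. g x \<partial>pmf_of_set S)"
  using assms by (simp add: integral_pmf_of_set divide_right_mono sum_mono)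

lemma integral_pmf_of_set_le_sqrt:
  fixes f :: "'a \<Rightarrow> real"
  assumes "finite S" "S \<noteq> {}"
  shows "(\<integral>x. f x \<partial>pmf_of_set S) \<le> sqrt (\<integral>x. (f x)\<^sup>2 \<partial>pmf_of_set S)"
proof -
  have N: "real (card S) > 0" using assms by (simp add: card_gt_0_iff)
  have "(\<Sum>x\<in>S. f x * 1)\<^sup>2 \<le> (\<Sum>x\<in>S. (f x)\<^sup>2) * (\<Sum>x\<in>S. 1\<^sup>2)"
    by (rule Cauchy_Schwarz_ineq_sum)
  then have "((\<Sum>x\<in>S. f x) / real (card S))\<^sup>2 \<le> (\<Sum>x\<in>S. (f x)\<^sup>2) / real (card S)"
    using N by (simp add: power_divide field_simps power2_eq_square)
  then show ?thesis using assms by (simp add: integral_pmf_of_set real_le_rsqrt)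
qed

section \<open>The largest eigenvalue of \<open>A\<^sup>T A\<close>\<close>

lemma inner_transpose_mult_self:
  fixes A :: "real ^ 'n ^ 'm"
  shows "((transpose A ** A) *v v) \<bullet> w = (A *v v) \<bullet> (A *v w)"
  by (simp add: matrix_vector_mul_assoc[symmetric] dot_lmul_matrix)

lemma power2_norm_add_scaleR:
  fixes a b :: "'a::real_inner"
  shows "(norm (a + t *\<^sub>R b))\<^sup>2 = (norm a)\<^sup>2 + 2 * t * (a \<bullet> b) + t\<^sup>2 * (norm b)\<^sup>2"
  unfolding power2_norm_eq_inner
  by (simp add: inner_add_left inner_add_right inner_commute power2_eq_square algebra_simps)

lemma linear_coeff_eq_0_if_quadratic_nonpos:
  fixes g c :: real
  assumes "\<And>t. 2 * t * g + t\<^sup>2 * c \<le> 0"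
  shows "g = 0"
proof -
  define s where "s = \<bar>c\<bar> + 1"
  have s: "s > 0" "2 * s + c > 0" unfolding s_def by auto
  have "2 * (g / s) * g + (g / s)\<^sup>2 * c \<le> 0" by (rule assms)
  then have "g\<^sup>2 * (2 * s + c) \<le> 0"
    using s by (simp add: field_simps power2_eq_square)
  then have "g\<^sup>2 \<le> 0" using s by (simp add: mult_le_0_iff)
  then show ?thesis by simp
qed

text \<open>A maximiser of \<open>\<parallel>A v\<parallel>\<close> on the unit sphere is a critical point of the Rayleigh quotient,
  hence an eigenvector of \<open>A\<^sup>T A\<close>.\<close>
lemma transpose_mult_self_top_eigenvalue:
  fixes A :: "real ^ 'n ^ 'm"
  obtains l v where "v \<noteq> 0" "(transpose A ** A) *v v = l *\<^sub>R v"
    and "\<And>u. (norm (A *v u))\<^sup>2 \<le> l * (norm u)\<^sup>2"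
proof -
  have "axis undefined 1 \<in> sphere (0::real^'n) 1" by simp
  then have sphere_ne: "sphere (0::real^'n) 1 \<noteq> {}" by blast
  have "continuous_on (sphere 0 1) (\<lambda>v. (norm (A *v v))\<^sup>2)"
    by (intro continuous_intros)
  then obtain v where "v \<in> sphere 0 1"
    and v_max: "\<forall>u\<in>sphere 0 1. (norm (A *v u))\<^sup>2 \<le> (norm (A *v v))\<^sup>2"
    using continuous_attains_sup[OF compact_sphere sphere_ne] by blast
  then have v: "norm v = 1" by simp
  define l where "l = (norm (A *v v))\<^sup>2"
  have bound: "(norm (A *v u))\<^sup>2 \<le> l * (norm u)\<^sup>2" for u
  proof (cases "u = 0")
    case False
    then have "(norm (A *v ((1 / norm u) *\<^sub>R u)))\<^sup>2 \<le> l"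
      unfolding l_def using v_max by simp
    then show ?thesis using False by (simp add: matrix_vector_mult_scaleR power_divide divide_le_eq mult.commute)
  qed simp
  have critical: "(A *v v) \<bullet> (A *v w) = l * (v \<bullet> w)" for w
  proof -
    have "2 * t * ((A *v v) \<bullet> (A *v w) - l * (v \<bullet> w)) + t\<^sup>2 * ((norm (A *v w))\<^sup>2 - l * (norm w)\<^sup>2) \<le> 0" for t
      using bound[of "v + t *\<^sub>R w"] v
      by (simp add: matrix_vector_right_distrib matrix_vector_mult_scaleR power2_norm_add_scaleR l_def algebra_simps)
    then show ?thesis using linear_coeff_eq_0_if_quadratic_nonpos by force
  qed
  have "(transpose A ** A) *v v = l *\<^sub>R v"
  proof -
    let ?d = "(transpose A ** A) *v v - l *\<^sub>R v"
    have "?d \<bullet> ?d = 0"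
      using critical[of ?d] by (simp add: inner_diff_left inner_transpose_mult_self)
    then show ?thesis by simp
  qed
  moreover have "v \<noteq> 0" using v by auto
  ultimately show ?thesis using that bound by blast
qed

text \<open>Eigenvectors of the symmetric matrix \<open>A\<^sup>T A\<close> for distinct eigenvalues are orthogonal,
  hence independent, so there are only finitely many eigenvalues.\<close>
lemma finite_eigenvalues_transpose_mult_self:
  fixes A :: "real ^ 'n ^ 'm"
  shows "finite {c. \<exists>v. v \<noteq> 0 \<and> (transpose A ** A) *v v = c *\<^sub>R v}"
proof -
  define E where "E = {c. \<exists>v. v \<noteq> 0 \<and> (transpose A ** A) *v v = c *\<^sub>R v}"
  define ev where "ev c = (SOME v. v \<noteq> 0 \<and> (transpose A ** A) *v v = c *\<^sub>R v)" for c
  have ev: "ev c \<noteq> 0 \<and> (transpose A ** A) *v ev c = c *\<^sub>R ev c" if "c \<in> E" for c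
  proof -
    from that obtain v where "v \<noteq> 0 \<and> (transpose A ** A) *v v = c *\<^sub>R v" unfolding E_def by blast
    then show ?thesis unfolding ev_def by (rule someI)
  qed
  have ev_inner: "c * (ev c \<bullet> ev d) = d * (ev c \<bullet> ev d)" if "c \<in> E" "d \<in> E" for c d
  proof -
    have "c * (ev c \<bullet> ev d) = ((transpose A ** A) *v ev c) \<bullet> ev d"
      using ev[OF that(1)] by simp
    also have "\<dots> = ((transpose A ** A) *v ev d) \<bullet> ev c"
      using inner_transpose_mult_self[of A "ev c" "ev d"] inner_transpose_mult_self[of A "ev d" "ev c"]
        inner_commute[of "A *v ev c" "A *v ev d"] by linarith
    also have "\<dots> = d * (ev c \<bullet> ev d)"
      using ev[OF that(2)] by (simp add: inner_commute)
    finally show ?thesis .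
  qed
  have inj: "inj_on ev E"
  proof (rule inj_onI)
    fix c d assume cd: "c \<in> E" "d \<in> E" "ev c = ev d"
    then have "c * (ev c \<bullet> ev c) = d * (ev c \<bullet> ev c)" using ev_inner[OF cd(1,2)] by simp
    then show "c = d" using ev[OF cd(1)] by simp
  qed
  have "pairwise orthogonal (ev ` E)"
  proof (rule pairwiseI)
    fix u w assume "u \<in> ev ` E" "w \<in> ev ` E" "u \<noteq> w"
    then obtain c d where "c \<in> E" "d \<in> E" "u = ev c" "w = ev d" "c \<noteq> d" by blast
    then show "orthogonal u w" using ev_inner[of c d] by (simp add: orthogonal_def)
  qed
  moreover have "0 \<notin> ev ` E" using ev by fastforce
  ultimately have "independent (ev ` E)" by (simp add: pairwise_orthogonal_independent)
  then have "finite (ev ` E)" by (rule independent_bound_general[THEN conjunct1])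
  then show ?thesis using inj unfolding E_def[symmetric] by (rule finite_imageD)
qed

lemma power2_norm_le_lambda_max:
  fixes A :: "real ^ 'n ^ 'm"
  shows "(norm (A *v v))\<^sup>2 \<le> lambda_max (transpose A ** A) * (norm v)\<^sup>2"
proof -
  obtain l u where "u \<noteq> 0" "(transpose A ** A) *v u = l *\<^sub>R u"
    and bound: "\<And>v. (norm (A *v v))\<^sup>2 \<le> l * (norm v)\<^sup>2"
    using transpose_mult_self_top_eigenvalue[of A] by blast
  then have "l \<in> {c. \<exists>v. v \<noteq> 0 \<and> (transpose A ** A) *v v = c *\<^sub>R v}" by blast
  then have "l \<le> lambda_max (transpose A ** A)"
    unfolding lambda_max_def by (rule Max_ge[OF finite_eigenvalues_transpose_mult_self])
  then have "l * (norm v)\<^sup>2 \<le> lambda_max (transpose A ** A) * (norm v)\<^sup>2"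
    by (rule mult_right_mono) simp
  with bound show ?thesis by (rule order_trans)
qed

lemma one_le_lambda_max:
  fixes A :: "real ^ 'n ^ 'm"
  assumes "norm (A $ i) = 1"
  shows "1 \<le> lambda_max (transpose A ** A)"
proof -
  have "(A *v (A $ i)) $ i = 1"
    using assms by (simp add: matrix_vector_mul_component power2_norm_eq_inner[symmetric])
  then have "1 \<le> norm (A *v (A $ i))" using component_le_norm_cart[of "A *v (A $ i)" i] by simp
  then have "1 \<le> (norm (A *v (A $ i)))\<^sup>2" by (simp add: one_le_power)
  also have "\<dots> \<le> lambda_max (transpose A ** A)"
    using power2_norm_le_lambda_max[of A "A $ i"] assms by simp
  finally show ?thesis .
qed

section \<open>One step of the greedy sketched Kaczmarz method\<close>

lemma power2_norm_vec: "(norm (v :: real ^ 'k))\<^sup>2 = (\<Sum>i\<in>UNIV. (v $ i)\<^sup>2)"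
  unfolding power2_norm_eq_inner inner_vec_def by (simp add: power2_eq_square)

locale gskm_setting =
  fixes A :: "real ^ 'n ^ ('m::finite)" and b :: "real ^ 'm" and \<delta> L :: real and \<beta> :: nat
    and sel :: "real ^ 'n \<Rightarrow> 'm set \<Rightarrow> 'm" and P :: "(real ^ 'n) set"
  assumes defP: "P = {x. \<forall>i. (A *v x) $ i \<le> b $ i}"
    and rows: "\<forall>i. norm (A $ i) = 1"
    and consistent: "P \<noteq> {}"
    and beta: "1 \<le> \<beta>" "\<beta> \<le> CARD('m)"
    and L: "L > 0"
    and hoffman: "\<forall>y. (infdist y P)\<^sup>2 \<le> L\<^sup>2 * (norm (pos_part_vec (A *v y - b)))\<^sup>2"
    and sel: "\<forall>y S. card S = \<beta> \<longrightarrow> sel y S \<in> S \<and>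
               (\<forall>i\<in>S. max ((A $ i) \<bullet> y - b $ i) 0 \<le> max ((A $ sel y S) \<bullet> y - b $ sel y S) 0)"
    and delta: "0 < \<delta>" "\<delta> < 2"
begin

definition residual :: "real ^ 'n \<Rightarrow> 'm \<Rightarrow> real" where
  "residual y i = max ((A $ i) \<bullet> y - b $ i) 0"

definition contraction :: real where
  "contraction = 1 - (2 * \<delta> - \<delta>\<^sup>2) / (real CARD('m) * L\<^sup>2)"

definition sketch_gain :: real where
  "sketch_gain = min 1 (real \<beta> / real CARD('m) * lambda_max (transpose A ** A))"

abbreviation sketches :: "'m set set" where
  "sketches \<equiv> subsets_of_size \<beta>"

abbreviation step :: "real ^ 'n \<Rightarrow> 'm set \<Rightarrow> real ^ 'n" where
  "step \<equiv> gskm_step A b \<delta> sel"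

lemma sketches_nonempty: "sketches \<noteq> {}"
  using subsets_of_size_nonempty[OF beta(2)] .

lemma closed_P: "closed P"
proof -
  have "P = {x. \<forall>i. (A $ i) \<bullet> x \<le> b $ i}"
    unfolding defP by (simp add: matrix_vector_mul_component)
  also have "closed \<dots>"
    by (intro closed_Collect_all closed_Collect_le continuous_intros)
  finally show ?thesis .
qed

lemma nearest_point:
  obtains p where "p \<in> P" "infdist y P = norm (y - p)"
  using infdist_attains_inf[OF closed_P consistent, of y] by (metis dist_norm)

lemma residual_nonneg: "0 \<le> residual y i"
  unfolding residual_def by simp

lemma residual_le_inner_diff:
  assumes "p \<in> P"
  shows "residual y i \<le> max ((A $ i) \<bullet> (y - p)) 0"
proof -
  have "(A $ i) \<bullet> p \<le> b $ i"
    using assms unfolding defP by (simp add: matrix_vector_mul_component)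
  then show ?thesis unfolding residual_def by (simp add: inner_diff_right)
qed

lemma residual_le_infdist: "residual y i \<le> infdist y P"
proof -
  obtain p where p: "p \<in> P" "infdist y P = norm (y - p)" by (rule nearest_point)
  have "(A $ i) \<bullet> (y - p) \<le> norm (A $ i) * norm (y - p)" by (rule norm_cauchy_schwarz)
  then have "max ((A $ i) \<bullet> (y - p)) 0 \<le> norm (y - p)" using rows by simp
  then show ?thesis using residual_le_inner_diff[OF p(1), of y i] p(2) by linarith
qed

lemma power2_norm_pos_part: "(norm (pos_part_vec (A *v y - b)))\<^sup>2 = (\<Sum>i\<in>UNIV. (residual y i)\<^sup>2)"
  unfolding power2_norm_vec pos_part_vec_def residual_def
  by (simp add: matrix_vector_mul_component)

lemma sel_max_residual:
  assumes "\<tau> \<in> sketches"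
  shows "sel y \<tau> \<in> \<tau>" "\<And>i. i \<in> \<tau> \<Longrightarrow> residual y i \<le> residual y (sel y \<tau>)"
  using sel assms unfolding subsets_of_size_def residual_def by auto

lemma step_eq: "step y \<tau> = y - (\<delta> * residual y (sel y \<tau>)) *\<^sub>R A $ sel y \<tau>"
  unfolding gskm_step_def residual_def Let_def ..

lemma norm_step_diff: "norm (step y \<tau> - y) = \<delta> * residual y (sel y \<tau>)"
  using rows delta residual_nonneg[of y "sel y \<tau>"] by (simp add: step_eq)

text \<open>The Kaczmarz step moves towards every point of the half-space \<open>a\<^sub>i\<^sup>T x \<le> b\<^sub>i\<close>, in particular
  towards the projection of \<open>y\<close> onto \<open>P\<close>.\<close>
lemma infdist_step_sq_le:
  "(infdist (step y \<tau>) P)\<^sup>2 \<le> (infdist y P)\<^sup>2 - (2 * \<delta> - \<delta>\<^sup>2) * (residual y (sel y \<tau>))\<^sup>2"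
proof -
  obtain p where p: "p \<in> P" "infdist y P = norm (y - p)" by (rule nearest_point)
  define a where "a = A $ sel y \<tau>"
  define r where "r = residual y (sel y \<tau>)"
  have a: "norm a = 1" using rows unfolding a_def by simp
  have "r * r \<le> r * ((y - p) \<bullet> a)"
    using residual_le_inner_diff[OF p(1), of y "sel y \<tau>"] residual_nonneg[of y "sel y \<tau>"]
    unfolding r_def a_def by (cases "r > 0") (auto simp: r_def inner_commute)
  then have "2 * \<delta> * (r * r) \<le> 2 * \<delta> * (r * ((y - p) \<bullet> a))"
    by (rule mult_left_mono) (use delta in auto)
  moreover have "(norm (step y \<tau> - p))\<^sup>2 = (norm (y - p))\<^sup>2 - 2 * \<delta> * (r * ((y - p) \<bullet> a)) + \<delta>\<^sup>2 * r\<^sup>2"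
  proof -
    have "step y \<tau> - p = (y - p) + (- (\<delta> * r)) *\<^sub>R a"
      unfolding step_eq r_def a_def by simp
    then have "(norm (step y \<tau> - p))\<^sup>2
        = (norm (y - p))\<^sup>2 + 2 * (- (\<delta> * r)) * ((y - p) \<bullet> a) + (- (\<delta> * r))\<^sup>2 * (norm a)\<^sup>2"
      by (simp only: power2_norm_add_scaleR)
    then show ?thesis using a by (simp add: power2_eq_square)
  qed
  moreover have "infdist (step y \<tau>) P \<le> norm (step y \<tau> - p)"
    using infdist_le[OF p(1)] by (simp add: dist_norm)
  then have "(infdist (step y \<tau>) P)\<^sup>2 \<le> (norm (step y \<tau> - p))\<^sup>2"
    by (intro power_mono) (auto simp: infdist_nonneg)
  ultimately show ?thesis
    using p(2) unfolding r_def by (simp add: power2_eq_square algebra_simps)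
qed

text \<open>The selected residual is the largest one in the sketch, hence at least the average over it.\<close>
lemma integral_residual_sel_sq_ge:
  "(\<Sum>i\<in>UNIV. (residual y i)\<^sup>2) / real CARD('m) \<le> (\<integral>\<tau>. (residual y (sel y \<tau>))\<^sup>2 \<partial>pmf_of_set sketches)"
proof -
  have "(\<integral>\<tau>. (\<Sum>i\<in>\<tau>. (residual y i)\<^sup>2) / real \<beta> \<partial>pmf_of_set sketches)
      \<le> (\<integral>\<tau>. (residual y (sel y \<tau>))\<^sup>2 \<partial>pmf_of_set sketches)"
  proof (rule integral_pmf_of_set_mono[OF _ sketches_nonempty])
    fix \<tau> assume \<tau>: "\<tau> \<in> sketches"
    then have "(\<Sum>i\<in>\<tau>. (residual y i)\<^sup>2) \<le> of_nat (card \<tau>) * (residual y (sel y \<tau>))\<^sup>2"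
      using sel_max_residual[OF \<tau>] residual_nonneg
      by (intro sum_bounded_above power_mono) auto
    then show "(\<Sum>i\<in>\<tau>. (residual y i)\<^sup>2) / real \<beta> \<le> (residual y (sel y \<tau>))\<^sup>2"
      using \<tau> beta by (simp add: subsets_of_size_def field_simps)
  qed simp
  then show ?thesis
    using integral_sum_uniform_subset[OF beta, of "\<lambda>i. (residual y i)\<^sup>2"] beta by simp
qed

lemma integral_infdist_step_sq_le:
  "(\<integral>\<tau>. (infdist (step y \<tau>) P)\<^sup>2 \<partial>pmf_of_set sketches) \<le> contraction * (infdist y P)\<^sup>2"
proof -
  define \<eta> where "\<eta> = 2 * \<delta> - \<delta>\<^sup>2"
  define R where "R = (\<Sum>i\<in>UNIV. (residual y i)\<^sup>2)"
  have \<eta>: "0 \<le> \<eta>" unfolding \<eta>_def using delta by (simp add: power2_eq_square)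
  have "(infdist y P)\<^sup>2 / (real CARD('m) * L\<^sup>2) \<le> R / real CARD('m)"
    using hoffman power2_norm_pos_part L unfolding R_def
    by (simp add: divide_le_eq field_simps)
  also have "\<dots> \<le> (\<integral>\<tau>. (residual y (sel y \<tau>))\<^sup>2 \<partial>pmf_of_set sketches)"
    unfolding R_def by (rule integral_residual_sel_sq_ge)
  finally have "\<eta> * ((infdist y P)\<^sup>2 / (real CARD('m) * L\<^sup>2))
      \<le> \<eta> * (\<integral>\<tau>. (residual y (sel y \<tau>))\<^sup>2 \<partial>pmf_of_set sketches)"
    using \<eta> by (rule mult_left_mono)
  moreover have "(\<integral>\<tau>. (infdist (step y \<tau>) P)\<^sup>2 \<partial>pmf_of_set sketches)
      \<le> (\<integral>\<tau>. (infdist y P)\<^sup>2 - \<eta> * (residual y (sel y \<tau>))\<^sup>2 \<partial>pmf_of_set sketches)"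
    using infdist_step_sq_le unfolding \<eta>_def by (intro integral_pmf_of_set_mono[OF _ sketches_nonempty]) auto
  ultimately show ?thesis
    unfolding contraction_def \<eta>_def[symmetric]
    by (simp add: integrable_measure_pmf_finite algebra_simps)
qed

lemma integral_infdist_step_le:
  "(\<integral>\<tau>. infdist (step y \<tau>) P \<partial>pmf_of_set sketches) \<le> sqrt contraction * infdist y P"
proof -
  have "(\<integral>\<tau>. infdist (step y \<tau>) P \<partial>pmf_of_set sketches)
      \<le> sqrt (\<integral>\<tau>. (infdist (step y \<tau>) P)\<^sup>2 \<partial>pmf_of_set sketches)"
    by (rule integral_pmf_of_set_le_sqrt[OF _ sketches_nonempty]) simp
  also have "\<dots> \<le> sqrt (contraction * (infdist y P)\<^sup>2)"
    using integral_infdist_step_sq_le by simp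
  finally show ?thesis by (simp add: real_sqrt_mult infdist_nonneg)
qed

lemma sum_residual_sq_le_lambda_max:
  "(\<Sum>i\<in>UNIV. (residual y i)\<^sup>2) \<le> lambda_max (transpose A ** A) * (infdist y P)\<^sup>2"
proof -
  obtain p where p: "p \<in> P" "infdist y P = norm (y - p)" by (rule nearest_point)
  have "(\<Sum>i\<in>UNIV. (residual y i)\<^sup>2) \<le> (\<Sum>i\<in>UNIV. ((A *v (y - p)) $ i)\<^sup>2)"
  proof (rule sum_mono)
    fix i
    have "residual y i \<le> \<bar>(A *v (y - p)) $ i\<bar>"
      using residual_le_inner_diff[OF p(1), of y i] by (simp add: matrix_vector_mul_component)
    then show "(residual y i)\<^sup>2 \<le> ((A *v (y - p)) $ i)\<^sup>2"
      using residual_nonneg[of y i] by (metis abs_le_square_iff abs_of_nonneg)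
  qed
  also have "\<dots> = (norm (A *v (y - p)))\<^sup>2"
    by (simp add: power2_norm_vec)
  also have "\<dots> \<le> lambda_max (transpose A ** A) * (infdist y P)\<^sup>2"
    using power2_norm_le_lambda_max[of A "y - p"] p(2) by simp
  finally show ?thesis .
qed

text \<open>The two branches of \<open>\<mu>\<^sub>2\<close>: the selected residual is at most \<open>d(y, P)\<close>, and its square
  is at most the sum of the squared residuals in the sketch.\<close>
lemma integral_residual_sel_le:
  "(\<integral>\<tau>. residual y (sel y \<tau>) \<partial>pmf_of_set sketches) \<le> sqrt sketch_gain * infdist y P"
proof -
  define d where "d = infdist y P"
  have "(\<integral>\<tau>. (residual y (sel y \<tau>))\<^sup>2 \<partial>pmf_of_set sketches)
      \<le> (\<integral>\<tau>. (\<Sum>i\<in>\<tau>. (residual y i)\<^sup>2) \<partial>pmf_of_set sketches)"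
    using sel_max_residual residual_nonneg
    by (intro integral_pmf_of_set_mono[OF _ sketches_nonempty] member_le_sum) auto
  also have "\<dots> \<le> real \<beta> / real CARD('m) * (lambda_max (transpose A ** A) * d\<^sup>2)"
    unfolding integral_sum_uniform_subset[OF beta] d_def
    using sum_residual_sq_le_lambda_max by (intro mult_left_mono) auto
  finally have sketch_bound: "(\<integral>\<tau>. (residual y (sel y \<tau>))\<^sup>2 \<partial>pmf_of_set sketches)
      \<le> real \<beta> / real CARD('m) * lambda_max (transpose A ** A) * d\<^sup>2"
    by simp
  have "(\<integral>\<tau>. (residual y (sel y \<tau>))\<^sup>2 \<partial>pmf_of_set sketches) \<le> (\<integral>\<tau>. d\<^sup>2 \<partial>pmf_of_set sketches)"
    using residual_le_infdist residual_nonneg unfolding d_def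
    by (intro integral_pmf_of_set_mono[OF _ sketches_nonempty] power_mono) auto
  with sketch_bound have "(\<integral>\<tau>. (residual y (sel y \<tau>))\<^sup>2 \<partial>pmf_of_set sketches) \<le> sketch_gain * d\<^sup>2"
    unfolding sketch_gain_def by (simp add: min_def)
  then have "(\<integral>\<tau>. residual y (sel y \<tau>) \<partial>pmf_of_set sketches) \<le> sqrt (sketch_gain * d\<^sup>2)"
    using integral_pmf_of_set_le_sqrt[OF _ sketches_nonempty, of "\<lambda>\<tau>. residual y (sel y \<tau>)"]
    by (simp add: order_trans)
  then show ?thesis unfolding d_def by (simp add: real_sqrt_mult infdist_nonneg)
qed

text \<open>Evaluate the Hoffman bound at a point outside \<open>P\<close>, where every residual is at most the
  (positive) distance to \<open>P\<close>.\<close>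
lemma one_le_card_mult_hoffman: "1 \<le> real CARD('m) * L\<^sup>2"
proof -
  obtain p where p: "p \<in> P" using consistent by blast
  fix i :: 'm
  define y where "y = p + (\<bar>b $ i - (A $ i) \<bullet> p\<bar> + 1) *\<^sub>R A $ i"
  have "(A $ i) \<bullet> (A $ i) = 1" using rows by (metis norm_eq_1)
  then have "1 \<le> residual y i" unfolding residual_def y_def by (simp add: inner_add_right)
  then have d: "1 \<le> infdist y P" using residual_le_infdist[of y i] by simp
  have "(infdist y P)\<^sup>2 \<le> L\<^sup>2 * (\<Sum>j\<in>UNIV. (residual y j)\<^sup>2)"
    using hoffman power2_norm_pos_part by metis
  also have "\<dots> \<le> L\<^sup>2 * (real CARD('m) * (infdist y P)\<^sup>2)"
    using residual_le_infdist residual_nonneg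
    by (intro mult_left_mono sum_bounded_above[where A=UNIV, simplified] power_mono) auto
  finally have "1 * (infdist y P)\<^sup>2 \<le> (real CARD('m) * L\<^sup>2) * (infdist y P)\<^sup>2"
    by (simp add: algebra_simps)
  moreover have "0 < (infdist y P)\<^sup>2" using d by simp
  ultimately show ?thesis by (rule mult_right_le_imp_le)
qed

lemma contraction_nonneg: "0 \<le> contraction"
proof -
  have "2 * \<delta> - \<delta>\<^sup>2 \<le> 1"
    using zero_le_power2[of "1 - \<delta>"] by (simp add: power2_diff)
  then have "2 * \<delta> - \<delta>\<^sup>2 \<le> real CARD('m) * L\<^sup>2"
    using one_le_card_mult_hoffman by linarith
  moreover have "0 < real CARD('m) * L\<^sup>2"
    using one_le_card_mult_hoffman by linarith
  ultimately show ?thesis unfolding contraction_def by (simp add: field_simps)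
qed

lemma sketch_gain_pos: "0 < sketch_gain"
  using beta one_le_lambda_max[of A] rows unfolding sketch_gain_def by (simp add: less_le_trans)

end

section \<open>The iteration with momentum\<close>

locale gskm_iteration = gskm_setting A b \<delta> L \<beta> sel P
  for A :: "real ^ 'n ^ ('m::finite)" and b \<delta> L \<beta> sel P +
  fixes \<xi> :: real and x0 :: "real ^ 'n"
begin

abbreviation x_iter :: "nat \<Rightarrow> (nat \<Rightarrow> 'm set) \<Rightarrow> real ^ 'n" where
  "x_iter \<equiv> gskm_x A b \<delta> \<xi> sel x0"

abbreviation z_iter :: "nat \<Rightarrow> (nat \<Rightarrow> 'm set) \<Rightarrow> real ^ 'n" where
  "z_iter \<equiv> gskm_z A b \<delta> \<xi> sel x0"

abbreviation \<Omega> :: "(nat \<Rightarrow> 'm set) measure" where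
  "\<Omega> \<equiv> iid_space (pmf_of_set sketches)"

lemma x_iter_1: "x_iter 1 \<omega> = x0"
  unfolding gskm_x_def by simp

lemma z_iter_Suc: "z_iter (Suc k) \<omega> = step (x_iter (Suc k) \<omega>) (\<omega> (Suc k))"
  unfolding gskm_x_def gskm_z_def by (simp add: Let_def)

lemma x_iter_Suc_Suc: "x_iter (Suc (Suc k)) \<omega> = (1 - \<xi>) *\<^sub>R z_iter (Suc k) \<omega> + \<xi> *\<^sub>R z_iter k \<omega>"
  unfolding gskm_x_def gskm_z_def by (simp add: Let_def)

lemma z_iter_1: "z_iter 1 \<omega> = z_iter 0 \<omega>"
  using z_iter_Suc[of 0 \<omega>] x_iter_1 by (simp add: gskm_z_def)

lemma depends_on_prefix_gskm_pair: "depends_on_prefix (Suc (Suc k)) (gskm_pair A b \<delta> \<xi> sel x0 k)"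
  unfolding depends_on_prefix_def
proof (induction k)
  case (Suc k)
  show ?case
  proof (intro allI impI)
    fix \<omega> \<omega>' :: "nat \<Rightarrow> 'm set" assume eq: "\<forall>i<Suc (Suc (Suc k)). \<omega> i = \<omega>' i"
    then have "gskm_pair A b \<delta> \<xi> sel x0 k \<omega> = gskm_pair A b \<delta> \<xi> sel x0 k \<omega>'"
      by (intro Suc.IH[rule_format]) simp
    moreover have "\<omega> (Suc k) = \<omega>' (Suc k)" using eq by simp
    ultimately show "gskm_pair A b \<delta> \<xi> sel x0 (Suc k) \<omega> = gskm_pair A b \<delta> \<xi> sel x0 (Suc k) \<omega>'"
      by (simp add: Let_def)
  qed
qed simp

lemma depends_on_prefix_x_iter: "depends_on_prefix k (x_iter k)"
proof (cases "k \<le> 1")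
  case True
  then show ?thesis unfolding depends_on_prefix_def gskm_x_def by (auto simp: le_Suc_eq)
next
  case False
  then obtain i where k: "k = Suc (Suc i)" by (intro that[of "k - 2"]) simp
  show ?thesis unfolding depends_on_prefix_def
  proof (intro allI impI)
    fix \<omega> \<omega>' :: "nat \<Rightarrow> 'm set" assume eq: "\<forall>j<k. \<omega> j = \<omega>' j"
    then have "gskm_pair A b \<delta> \<xi> sel x0 i \<omega> = gskm_pair A b \<delta> \<xi> sel x0 i \<omega>'"
      using depends_on_prefix_gskm_pair[of i] unfolding depends_on_prefix_def k by blast
    moreover have "\<omega> (Suc i) = \<omega>' (Suc i)" using eq k by simp
    ultimately show "x_iter k \<omega> = x_iter k \<omega>'"
      unfolding k gskm_x_def by (simp add: Let_def)
  qed
qed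

lemma depends_on_prefix_z_iter: "depends_on_prefix (Suc (Suc k)) (z_iter k)"
  unfolding gskm_z_def by (rule depends_on_prefix_comp[OF depends_on_prefix_gskm_pair])

lemma integrable_x_iter: "integrable \<Omega> (\<lambda>\<omega>. g (x_iter k \<omega>) :: real)"
  by (rule integrable_iid_space, rule depends_on_prefix_comp, rule depends_on_prefix_x_iter)

lemma integrable_x_iter_coordinate: "integrable \<Omega> (\<lambda>\<omega>. g (x_iter k \<omega>) (\<omega> k) :: real)"
  by (rule integrable_iid_space, rule depends_on_prefix_comp2[where n = "Suc k"],
      rule depends_on_prefix_mono[OF depends_on_prefix_x_iter], simp, rule depends_on_prefix_coordinate, simp)

lemma integrable_z_iter: "integrable \<Omega> (\<lambda>\<omega>. g (z_iter k \<omega>) :: real)"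
  by (rule integrable_iid_space, rule depends_on_prefix_comp, rule depends_on_prefix_z_iter)

lemma integrable_z_iter_diff: "integrable \<Omega> (\<lambda>\<omega>. g (z_iter (Suc k) \<omega> - z_iter k \<omega>) :: real)"
  by (rule integrable_iid_space, rule depends_on_prefix_comp2, rule depends_on_prefix_z_iter,
      rule depends_on_prefix_mono[OF depends_on_prefix_z_iter], simp)

definition dist_mean :: "nat \<Rightarrow> real" where
  "dist_mean k = (\<integral>\<omega>. infdist (x_iter (Suc k) \<omega>) P \<partial>\<Omega>)"

definition step_mean :: "nat \<Rightarrow> real" where
  "step_mean k = (\<integral>\<omega>. norm (z_iter (Suc k) \<omega> - z_iter k \<omega>) \<partial>\<Omega>)"

lemma dist_mean_0: "dist_mean 0 = infdist x0 P"
proof -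
  interpret prob_space \<Omega> by (intro prob_space_PiM prob_space_measure_pmf)
  show ?thesis unfolding dist_mean_def by (simp add: gskm_x_def prob_space)
qed

lemma step_mean_0: "step_mean 0 = 0"
  unfolding step_mean_def using z_iter_1 by simp

lemma step_mean_nonneg: "0 \<le> step_mean k"
  unfolding step_mean_def by simp

text \<open>The sketch \<open>\<tau>\<^sub>k\<^sub>+\<^sub>1\<close> is drawn independently of \<open>x\<^sub>k\<^sub>+\<^sub>1\<close>, so one-step bounds in expectation over
  \<open>\<tau>\<close> carry over to the iteration.\<close>
lemma integral_fresh_sketch_le:
  assumes "\<And>y. (\<integral>\<tau>. \<phi> y \<tau> \<partial>pmf_of_set sketches) \<le> c * infdist y P"
  shows "(\<integral>\<omega>. \<phi> (x_iter (Suc k) \<omega>) (\<omega> (Suc k)) \<partial>\<Omega>) \<le> c * dist_mean k"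
proof -
  have "(\<integral>\<omega>. \<phi> (x_iter (Suc k) \<omega>) (\<omega> (Suc k)) \<partial>\<Omega>)
      = (\<integral>\<omega>. (\<integral>\<tau>. \<phi> (x_iter (Suc k) \<omega>) \<tau> \<partial>pmf_of_set sketches) \<partial>\<Omega>)"
    by (rule integral_iid_space_fresh_coordinate[OF depends_on_prefix_x_iter])
  also have "\<dots> \<le> (\<integral>\<omega>. c * infdist (x_iter (Suc k) \<omega>) P \<partial>\<Omega>)"
    by (rule integral_mono[OF integrable_x_iter integrable_x_iter]) (rule assms)
  finally show ?thesis unfolding dist_mean_def by simp
qed

lemma dist_mean_Suc_le: "dist_mean (Suc k) \<le> sqrt contraction * dist_mean k + \<bar>\<xi>\<bar> * step_mean k"
proof -
  have "infdist (x_iter (Suc (Suc k)) \<omega>) P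
      \<le> infdist (z_iter (Suc k) \<omega>) P + \<bar>\<xi>\<bar> * norm (z_iter (Suc k) \<omega> - z_iter k \<omega>)" for \<omega>
  proof -
    have "x_iter (Suc (Suc k)) \<omega> - z_iter (Suc k) \<omega> = \<xi> *\<^sub>R (z_iter k \<omega> - z_iter (Suc k) \<omega>)"
      unfolding x_iter_Suc_Suc by (simp add: algebra_simps)
    then have "dist (x_iter (Suc (Suc k)) \<omega>) (z_iter (Suc k) \<omega>) = \<bar>\<xi>\<bar> * norm (z_iter (Suc k) \<omega> - z_iter k \<omega>)"
      by (simp add: dist_norm norm_minus_commute)
    then show ?thesis using infdist_triangle[of "x_iter (Suc (Suc k)) \<omega>" P "z_iter (Suc k) \<omega>"] by simp
  qed
  then have "dist_mean (Suc k) \<le> (\<integral>\<omega>. infdist (z_iter (Suc k) \<omega>) P \<partial>\<Omega>) + \<bar>\<xi>\<bar> * step_mean k"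
    unfolding dist_mean_def step_mean_def
    by (rule integral_le_add_cmult[OF integrable_x_iter integrable_z_iter integrable_z_iter_diff])
  also have "(\<integral>\<omega>. infdist (z_iter (Suc k) \<omega>) P \<partial>\<Omega>) \<le> sqrt contraction * dist_mean k"
    unfolding z_iter_Suc by (rule integral_fresh_sketch_le[OF integral_infdist_step_le])
  finally show ?thesis by simp
qed

lemma step_mean_Suc_le:
  "step_mean (Suc k) \<le> \<bar>\<xi>\<bar> * step_mean k + \<delta> * sqrt sketch_gain * dist_mean (Suc k)"
proof -
  let ?r = "\<lambda>x \<tau>. \<delta> * residual x (sel x \<tau>)"
  have "norm (z_iter (Suc (Suc k)) \<omega> - z_iter (Suc k) \<omega>)
      \<le> ?r (x_iter (Suc (Suc k)) \<omega>) (\<omega> (Suc (Suc k))) + \<bar>\<xi>\<bar> * norm (z_iter (Suc k) \<omega> - z_iter k \<omega>)" for \<omega>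
  proof -
    let ?x = "x_iter (Suc (Suc k)) \<omega>"
    have "z_iter (Suc (Suc k)) \<omega> - z_iter (Suc k) \<omega>
        = (step ?x (\<omega> (Suc (Suc k))) - ?x) + \<xi> *\<^sub>R (z_iter k \<omega> - z_iter (Suc k) \<omega>)"
      unfolding z_iter_Suc[of "Suc k"] x_iter_Suc_Suc by (simp add: algebra_simps)
    then have "norm (z_iter (Suc (Suc k)) \<omega> - z_iter (Suc k) \<omega>)
        \<le> norm (step ?x (\<omega> (Suc (Suc k))) - ?x) + norm (\<xi> *\<^sub>R (z_iter k \<omega> - z_iter (Suc k) \<omega>))"
      by (metis norm_triangle_ineq)
    then show ?thesis
      by (simp add: norm_step_diff norm_minus_commute[of "z_iter k \<omega>"])
  qed
  then have "step_mean (Suc k)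
      \<le> (\<integral>\<omega>. ?r (x_iter (Suc (Suc k)) \<omega>) (\<omega> (Suc (Suc k))) \<partial>\<Omega>) + \<bar>\<xi>\<bar> * step_mean k"
    unfolding step_mean_def
    by (rule integral_le_add_cmult[OF integrable_z_iter_diff integrable_x_iter_coordinate integrable_z_iter_diff])
  also have "(\<integral>\<omega>. ?r (x_iter (Suc (Suc k)) \<omega>) (\<omega> (Suc (Suc k))) \<partial>\<Omega>) \<le> \<delta> * sqrt sketch_gain * dist_mean (Suc k)"
  proof (rule integral_fresh_sketch_le)
    fix y
    have "(\<integral>\<tau>. ?r y \<tau> \<partial>pmf_of_set sketches) = \<delta> * (\<integral>\<tau>. residual y (sel y \<tau>) \<partial>pmf_of_set sketches)"
      by simp
    also have "\<dots> \<le> \<delta> * (sqrt sketch_gain * infdist y P)"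
      using delta integral_residual_sel_le by (intro mult_left_mono) auto
    finally show "(\<integral>\<tau>. ?r y \<tau> \<partial>pmf_of_set sketches) \<le> \<delta> * sqrt sketch_gain * infdist y P"
      by (simp add: mult.assoc)
  qed
  finally show ?thesis by simp
qed

lemma AE_convergent_x_iter:
  assumes "summable step_mean"
  shows "AE \<omega> in \<Omega>. convergent (\<lambda>k. x_iter k \<omega>)"
proof -
  have "AE \<omega> in \<Omega>. convergent (\<lambda>k. z_iter k \<omega>)"
    using assms unfolding step_mean_def
    by (intro AE_convergent_if_summable_integral_norm_diff integrable_z_iter_diff)
  then show ?thesis
  proof (rule eventually_mono)
    fix \<omega> assume "convergent (\<lambda>k. z_iter k \<omega>)"
    then obtain l where "(\<lambda>k. z_iter k \<omega>) \<longlonglongrightarrow> l" by (auto simp: convergent_def)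
    then have "(\<lambda>k. (1 - \<xi>) *\<^sub>R z_iter (Suc k) \<omega> + \<xi> *\<^sub>R z_iter k \<omega>) \<longlonglongrightarrow> (1 - \<xi>) *\<^sub>R l + \<xi> *\<^sub>R l"
      by (intro tendsto_intros LIMSEQ_Suc)
    then have "(\<lambda>k. x_iter (Suc (Suc k)) \<omega>) \<longlonglongrightarrow> l"
      unfolding x_iter_Suc_Suc by (simp add: algebra_simps)
    then have "(\<lambda>k. x_iter (Suc k) \<omega>) \<longlonglongrightarrow> l" by (rule LIMSEQ_imp_Suc)
    then have "(\<lambda>k. x_iter k \<omega>) \<longlonglongrightarrow> l" by (rule LIMSEQ_imp_Suc)
    then show "convergent (\<lambda>k. x_iter k \<omega>)" by (rule convergentI)
  qed
qed

end

section \<open>A linear recurrence in two variables\<close>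

text \<open>\<open>coupled_seq p\<^sub>1 p\<^sub>2 p\<^sub>3 p\<^sub>4 k\<close> is the first column of the \<open>k\<close>-th power of the matrix
  \<open>[[p\<^sub>1, p\<^sub>2], [p\<^sub>3, p\<^sub>4]]\<close>.\<close>
fun coupled_seq :: "real \<Rightarrow> real \<Rightarrow> real \<Rightarrow> real \<Rightarrow> nat \<Rightarrow> real \<times> real" where
  "coupled_seq p1 p2 p3 p4 0 = (1, 0)"
| "coupled_seq p1 p2 p3 p4 (Suc k) =
     (p1 * fst (coupled_seq p1 p2 p3 p4 k) + p2 * snd (coupled_seq p1 p2 p3 p4 k),
      p3 * fst (coupled_seq p1 p2 p3 p4 k) + p4 * snd (coupled_seq p1 p2 p3 p4 k))"

lemma coupled_seq_bound:
  fixes u e :: "nat \<Rightarrow> real"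
  assumes p: "0 \<le> p1" "0 \<le> p2" "0 \<le> p3" "0 \<le> p4"
    and init: "u 0 \<le> d" "e 0 \<le> 0" "0 \<le> d"
    and rec_u: "\<And>k. u (Suc k) \<le> p1 * u k + p2 * e k"
    and rec_e: "\<And>k. e (Suc k) \<le> p3 * u k + p4 * e k"
  shows "u k \<le> fst (coupled_seq p1 p2 p3 p4 k) * d \<and> e k \<le> snd (coupled_seq p1 p2 p3 p4 k) * d"
proof (induction k)
  case (Suc k)
  let ?a = "fst (coupled_seq p1 p2 p3 p4 k)" and ?b = "snd (coupled_seq p1 p2 p3 p4 k)"
  have "p1 * u k + p2 * e k \<le> p1 * (?a * d) + p2 * (?b * d)"
    "p3 * u k + p4 * e k \<le> p3 * (?a * d) + p4 * (?b * d)"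
    using Suc p by (auto intro!: add_mono mult_left_mono)
  then show ?case using rec_u[of k] rec_e[of k] by (simp add: algebra_simps)
qed (use init in simp)

text \<open>Diagonalisation: \<open>r\<^sub>1, r\<^sub>2\<close> are the eigenvalues of the matrix and \<open>(G\<^sub>i, 1)\<close> the eigenvectors.\<close>
lemma coupled_seq_closed_form:
  fixes p1 p2 p3 p4 D :: real
  assumes p3: "0 < p3" and D: "D = (p1 - p4)\<^sup>2 + 4 * p2 * p3" "0 < D"
  defines "G1 \<equiv> (p1 - p4 + sqrt D) / (2 * p3)" and "G2 \<equiv> (p1 - p4 - sqrt D) / (2 * p3)"
    and "G3 \<equiv> p3 / sqrt D"
    and "r1 \<equiv> (p1 + p4 - sqrt D) / 2" and "r2 \<equiv> (p1 + p4 + sqrt D) / 2"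
  shows "coupled_seq p1 p2 p3 p4 k = (G3 * (G1 * r2 ^ k - G2 * r1 ^ k), G3 * (r2 ^ k - r1 ^ k))"
proof (induction k)
  have "sqrt D > 0" using D by simp
  then show "coupled_seq p1 p2 p3 p4 0 = (G3 * (G1 * r2 ^ 0 - G2 * r1 ^ 0), G3 * (r2 ^ 0 - r1 ^ 0))"
    unfolding G1_def G2_def G3_def using p3 by (simp add: field_simps)
next
  case (Suc k)
  have sqrt_D: "sqrt D * sqrt D = D" using D by simp
  have eig1: "G1 * r2 = p1 * G1 + p2" "r2 = p3 * G1 + p4"
    unfolding G1_def r2_def using p3 sqrt_D D(1)
    by (simp_all add: field_simps power2_eq_square) algebra
  have eig2: "G2 * r1 = p1 * G2 + p2" "r1 = p3 * G2 + p4"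
    unfolding G2_def r1_def using p3 sqrt_D D(1)
    by (simp_all add: field_simps power2_eq_square) algebra
  have "coupled_seq p1 p2 p3 p4 (Suc k)
      = (G3 * ((p1 * G1 + p2) * r2 ^ k - (p1 * G2 + p2) * r1 ^ k),
         G3 * ((p3 * G1 + p4) * r2 ^ k - (p3 * G2 + p4) * r1 ^ k))"
    using Suc by (simp add: algebra_simps)
  also have "\<dots> = (G3 * (G1 * r2 ^ Suc k - G2 * r1 ^ Suc k), G3 * (r2 ^ Suc k - r1 ^ Suc k))"
    unfolding eig1(1)[symmetric] eig2(1)[symmetric] eig1(2)[symmetric] eig2(2)[symmetric]
    by (simp add: algebra_simps)
  finally show ?case .
qed

lemma coupled_seq_eq_0:
  assumes "p1 = 0" "p3 = 0" "1 \<le> k"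
  shows "coupled_seq p1 p2 p3 p4 k = (0, 0)"
  using assms(3) by (induction k rule: dec_induct) (simp_all add: assms(1,2))

locale gskm_rates =
  fixes c \<Pi>1 \<Pi>2 \<Pi>3 \<Pi>4 D \<Gamma>1 \<Gamma>2 \<Gamma>3 \<rho>1 \<rho>2 :: real
  assumes \<Pi>3: "\<Pi>3 = c * \<Pi>1" and \<Pi>4: "\<Pi>4 = \<Pi>2 * (1 + c)"
    and D: "D = (\<Pi>1 - \<Pi>4)\<^sup>2 + 4 * \<Pi>2 * \<Pi>3"
    and \<Gamma>1: "\<Gamma>1 = (\<Pi>1 - \<Pi>4 + sqrt D) / (2 * \<Pi>3)"
    and \<Gamma>2: "\<Gamma>2 = (\<Pi>1 - \<Pi>4 - sqrt D) / (2 * \<Pi>3)"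
    and \<Gamma>3: "\<Gamma>3 = \<Pi>3 / sqrt D"
    and \<rho>1: "\<rho>1 = (\<Pi>1 + \<Pi>4 - sqrt D) / 2"
    and \<rho>2: "\<rho>2 = (\<Pi>1 + \<Pi>4 + sqrt D) / 2"
    and c_pos: "0 < c" and \<Pi>1_nonneg: "0 \<le> \<Pi>1" and \<Pi>2: "0 \<le> \<Pi>2" "\<Pi>2 < 1"
    and rate_lt_1: "(1 - \<Pi>2) * \<Pi>1 + \<Pi>4 < 1"
begin

lemma \<Pi>_nonneg: "0 \<le> \<Pi>3" "0 \<le> \<Pi>4"
  using \<Pi>3 \<Pi>4 c_pos \<Pi>1_nonneg \<Pi>2 by simp_all

lemma D_nonneg: "0 \<le> D"
  using D \<Pi>2 \<Pi>_nonneg by simp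

text \<open>The product of the eigenvalues is \<open>\<Pi>\<^sub>1 \<Pi>\<^sub>4 - \<Pi>\<^sub>2 \<Pi>\<^sub>3 = \<Pi>\<^sub>1 \<Pi>\<^sub>2 \<ge> 0\<close>, and
  \<open>rate_lt_1\<close> says that the characteristic polynomial is positive at \<open>1\<close>.\<close>
lemma sqrt_D_bounds: "\<bar>\<Pi>1 - \<Pi>4\<bar> \<le> sqrt D" "sqrt D \<le> \<Pi>1 + \<Pi>4" "sqrt D < 2 - \<Pi>1 - \<Pi>4"
proof -
  have det: "\<Pi>1 * \<Pi>4 - \<Pi>2 * \<Pi>3 = \<Pi>1 * \<Pi>2" using \<Pi>3 \<Pi>4 by (simp add: algebra_simps)
  have "(\<Pi>1 - \<Pi>4)\<^sup>2 \<le> D" using D \<Pi>2 \<Pi>_nonneg by simp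
  then show "\<bar>\<Pi>1 - \<Pi>4\<bar> \<le> sqrt D" using real_sqrt_le_mono by fastforce
  have "(\<Pi>1 + \<Pi>4)\<^sup>2 - D = 4 * (\<Pi>1 * \<Pi>4 - \<Pi>2 * \<Pi>3)"
    using D by (simp add: power2_eq_square algebra_simps)
  then have "(\<Pi>1 + \<Pi>4)\<^sup>2 - D = 4 * (\<Pi>1 * \<Pi>2)" using det by simp
  then have "D \<le> (\<Pi>1 + \<Pi>4)\<^sup>2" using mult_nonneg_nonneg[OF \<Pi>1_nonneg \<Pi>2(1)] by linarith
  then show "sqrt D \<le> \<Pi>1 + \<Pi>4"
    using real_sqrt_le_mono \<Pi>1_nonneg \<Pi>_nonneg by fastforce
  have "\<Pi>2 \<le> \<Pi>4" using \<Pi>4 \<Pi>2 c_pos by (simp add: algebra_simps)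
  then have "(1 - \<Pi>2) * \<Pi>1 < (1 - \<Pi>2) * 1" using rate_lt_1 by simp
  then have "\<Pi>1 < 1" using \<Pi>2 by simp
  then have "\<Pi>2 * \<Pi>1 \<le> 1" using \<Pi>1_nonneg \<Pi>2 by (simp add: mult_le_one)
  then have pos: "0 < 2 - \<Pi>1 - \<Pi>4" using rate_lt_1 by (simp add: algebra_simps)
  have "(2 - \<Pi>1 - \<Pi>4)\<^sup>2 - D = 4 * (1 - \<Pi>1 - \<Pi>4 + (\<Pi>1 * \<Pi>4 - \<Pi>2 * \<Pi>3))"
    using D by (simp add: power2_eq_square algebra_simps)
  then have "D < (2 - \<Pi>1 - \<Pi>4)\<^sup>2" using det rate_lt_1 by (simp add: algebra_simps)
  then show "sqrt D < 2 - \<Pi>1 - \<Pi>4"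
    using real_sqrt_less_mono pos by fastforce
qed

lemma rates: "0 \<le> \<Gamma>1" "0 \<le> \<Gamma>3" "0 \<le> \<rho>1" "\<rho>1 \<le> \<rho>2" "\<rho>2 < 1"
  using sqrt_D_bounds \<Pi>_nonneg D_nonneg unfolding \<Gamma>1 \<Gamma>3 \<rho>1 \<rho>2 by auto

lemma coupled_seq_rates:
  assumes "1 \<le> k"
  shows "coupled_seq \<Pi>1 \<Pi>2 \<Pi>3 \<Pi>4 k = (\<Gamma>3 * (\<Gamma>1 * \<rho>2 ^ k - \<Gamma>2 * \<rho>1 ^ k), \<Gamma>3 * (\<rho>2 ^ k - \<rho>1 ^ k))"
proof (cases "\<Pi>1 = 0")
  case True
  then have "\<Pi>3 = 0" using \<Pi>3 by simp
  with True show ?thesis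
    using coupled_seq_eq_0[OF _ _ assms] unfolding \<Gamma>1 \<Gamma>2 \<Gamma>3 by simp
next
  case False
  then have "0 < \<Pi>3" using \<Pi>3 c_pos \<Pi>1_nonneg by simp
  moreover have "0 < D"
  proof (cases "\<Pi>2 = 0")
    case True
    then show ?thesis using D \<Pi>4 False by simp
  next
    case False
    then show ?thesis using D \<Pi>2 \<open>0 < \<Pi>3\<close> by (simp add: add_nonneg_pos)
  qed
  ultimately show ?thesis
    unfolding \<Gamma>1 \<Gamma>2 \<Gamma>3 \<rho>1 \<rho>2 by (rule coupled_seq_closed_form[OF _ D])
qed

context
  fixes u e :: "nat \<Rightarrow> real" and d :: real
  assumes init: "0 \<le> d" "u 0 \<le> d" "e 0 \<le> 0"
    and rec_u: "\<And>k. u (Suc k) \<le> \<Pi>1 * u k + \<Pi>2 * e k"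
    and rec_e: "\<And>k. e (Suc k) \<le> \<Pi>2 * e k + c * u (Suc k)"
begin

lemma coupled_recurrence: "e (Suc k) \<le> \<Pi>3 * u k + \<Pi>4 * e k"
proof -
  have "e (Suc k) \<le> \<Pi>2 * e k + c * (\<Pi>1 * u k + \<Pi>2 * e k)"
    using rec_e[of k] mult_left_mono[OF rec_u[of k] less_imp_le[OF c_pos]] by linarith
  then show ?thesis using \<Pi>3 \<Pi>4 by (simp add: algebra_simps)
qed

lemma recurrence_bounds:
  assumes "1 \<le> k"
  shows "u k \<le> (- \<Gamma>2 * \<Gamma>3 * \<rho>1 ^ k + \<Gamma>1 * \<Gamma>3 * \<rho>2 ^ k) * d"
    and "e k \<le> (- \<Gamma>3 * \<rho>1 ^ k + \<Gamma>3 * \<rho>2 ^ k) * d"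
  using coupled_seq_bound[OF \<Pi>1_nonneg \<Pi>2(1) \<Pi>_nonneg init(2,3,1) rec_u coupled_recurrence, of k]
  unfolding coupled_seq_rates[OF assms] by (simp_all add: algebra_simps)

lemma summable_recurrence:
  assumes "\<And>k. 0 \<le> e k"
  shows "summable e"
proof (rule summable_comparison_test')
  show "summable (\<lambda>k. \<Gamma>3 * d * \<rho>2 ^ k)"
    using rates by (intro summable_mult summable_geometric) auto
  show "norm (e k) \<le> \<Gamma>3 * d * \<rho>2 ^ k" for k
  proof (cases "k = 0")
    case True
    then show ?thesis using assms[of 0] init rates by simp
  next
    case False
    then have "e k \<le> (- \<Gamma>3 * \<rho>1 ^ k + \<Gamma>3 * \<rho>2 ^ k) * d" by (intro recurrence_bounds) simp
    moreover have "0 \<le> \<Gamma>3 * \<rho>1 ^ k * d" using rates init by simp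
    ultimately show ?thesis using assms[of k] by (simp add: algebra_simps)
  qed
qed

end

end

theorem theorem4:
  fixes A :: "real ^ 'n ^ ('m::finite)" and b :: "real ^ 'm"
    and L \<delta> \<xi> :: real and \<beta> :: nat and x0 :: "real ^ 'n"
    and sel :: "real ^ 'n \<Rightarrow> 'm set \<Rightarrow> 'm"
    and P :: "(real ^ 'n) set" and m \<mu>1 \<mu>2 \<eta> h \<Pi>1 \<Pi>2 \<Pi>3 \<Pi>4 D \<Gamma>1 \<Gamma>2 \<Gamma>3 \<rho>1 \<rho>2 :: real
    and M :: "(nat \<Rightarrow> 'm set) measure"
    and x z :: "nat \<Rightarrow> (nat \<Rightarrow> 'm set) \<Rightarrow> real ^ 'n"
  assumes defP: "P = {x. \<forall>i. (A *v x) $ i \<le> b $ i}"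
    and defm: "m = real CARD('m)"
    and "\<mu>1 = 1 / (m * L\<^sup>2)"
    and "\<mu>2 = min 1 (real \<beta> / m * lambda_max (transpose A ** A))"
    and "\<eta> = 2 * \<delta> - \<delta>\<^sup>2"
    and "h = 1 - \<eta> * \<mu>1"
    and "\<Pi>1 = sqrt h"
    and "\<Pi>2 = \<bar>\<xi>\<bar>"
    and "\<Pi>3 = \<delta> * sqrt (\<mu>2 * h)"
    and "\<Pi>4 = \<bar>\<xi>\<bar> * (1 + \<delta> * sqrt \<mu>2)"
    and "D = (\<Pi>1 - \<Pi>4)\<^sup>2 + 4 * \<Pi>2 * \<Pi>3"
    and "\<Gamma>1 = (\<Pi>1 - \<Pi>4 + sqrt D) / (2 * \<Pi>3)"
    and "\<Gamma>2 = (\<Pi>1 - \<Pi>4 - sqrt D) / (2 * \<Pi>3)"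
    and "\<Gamma>3 = \<Pi>3 / sqrt D"
    and "\<rho>1 = (\<Pi>1 + \<Pi>4 - sqrt D) / 2"
    and "\<rho>2 = (\<Pi>1 + \<Pi>4 + sqrt D) / 2"
    and "M = gskm_space \<beta>"
    and "x = gskm_x A b \<delta> \<xi> sel x0"
    and "z = gskm_z A b \<delta> \<xi> sel x0"
    and rows: "\<forall>i. norm (A $ i) = 1"
    and consistent: "P \<noteq> {}"
    and beta: "1 \<le> \<beta>" "\<beta> \<le> CARD('m)"
    and L: "L > 0"
    and hoffman: "\<forall>y. (infdist y P)\<^sup>2 \<le> L\<^sup>2 * (norm (pos_part_vec (A *v y - b)))\<^sup>2"
    and sel: "\<forall>y S. card S = \<beta> \<longrightarrow> sel y S \<in> S \<and>
               (\<forall>i\<in>S. max ((A $ i) \<bullet> y - b $ i) 0 \<le> max ((A $ sel y S) \<bullet> y - b $ sel y S) 0)"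
    and delta: "0 < \<delta>" "\<delta> < 2"
    and xi: "-1 < \<xi>" "\<xi> \<le> 0"
    and cond: "(1 + \<xi>) * sqrt h - \<xi> * (1 + \<delta> * sqrt \<mu>2) < 1"
  shows "(AE \<omega> in M. convergent (\<lambda>k. x k \<omega>))
    \<and> (\<forall>k\<ge>1. (\<integral>\<omega>. infdist (x (k + 1) \<omega>) P \<partial>M)
              \<le> (- \<Gamma>2 * \<Gamma>3 * \<rho>1 ^ k + \<Gamma>1 * \<Gamma>3 * \<rho>2 ^ k) * infdist x0 P)
    \<and> (\<forall>k\<ge>1. (\<integral>\<omega>. norm (z (k + 1) \<omega> - z k \<omega>) \<partial>M)
              \<le> (- \<Gamma>3 * \<rho>1 ^ k + \<Gamma>3 * \<rho>2 ^ k) * infdist x0 P)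
    \<and> \<Gamma>1 \<ge> 0 \<and> \<Gamma>3 \<ge> 0 \<and> 0 \<le> \<rho>1 \<and> \<rho>1 \<le> \<rho>2 \<and> \<rho>2 < 1"
proof -
  interpret gskm_iteration A b \<delta> L \<beta> sel P \<xi> x0
    using defP rows consistent beta L hoffman sel delta by unfold_locales auto
  have h: "h = contraction"
    using assms(3,5,6) defm by (simp add: contraction_def)
  have \<mu>2: "\<mu>2 = sketch_gain"
    using assms(4) defm by (simp add: sketch_gain_def)
  interpret gskm_rates "\<delta> * sqrt \<mu>2" \<Pi>1 \<Pi>2 \<Pi>3 \<Pi>4 D \<Gamma>1 \<Gamma>2 \<Gamma>3 \<rho>1 \<rho>2
    using assms(7-16) xi cond delta h \<mu>2 contraction_nonneg sketch_gain_pos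
    by unfold_locales (simp_all add: real_sqrt_mult algebra_simps)
  have rec_u: "dist_mean (Suc k) \<le> \<Pi>1 * dist_mean k + \<Pi>2 * step_mean k" for k
    using dist_mean_Suc_le assms(7,8) h by simp
  have rec_e: "step_mean (Suc k) \<le> \<Pi>2 * step_mean k + \<delta> * sqrt \<mu>2 * dist_mean (Suc k)" for k
    using step_mean_Suc_le assms(8) \<mu>2 by simp
  note init = infdist_nonneg[of x0 P] dist_mean_0[THEN eq_refl] step_mean_0[THEN eq_refl]
  have "AE \<omega> in \<Omega>. convergent (\<lambda>k. x_iter k \<omega>)"
    by (intro AE_convergent_x_iter summable_recurrence[OF init rec_u rec_e step_mean_nonneg])
  moreover have "x = x_iter" "z = z_iter" "M = \<Omega>"
    using assms(17-19) by (simp_all add: gskm_space_def)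
  ultimately show ?thesis
    using recurrence_bounds[OF init rec_u rec_e] rates unfolding dist_mean_def step_mean_def by auto
qed

end
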